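(* Let $p>0$ and let $(u_n)_{n\ge0}$ be a sequence in $E^1$ with partial sums $s_n=\sum_{k=0}^n u_k$. If the series $\sum u_n$ converges to $\nu\in E^1$ (i.e. $D(s_n,\nu)\to0$), then $\sum u_n$ is $E_p$ summable to $\nu$, i.e. $D\big(\frac{1}{(p+1)^n}\sum_{k=0}^n\binom{n}{k}p^{n-k}s_k,\nu\big)\to0$.
   Context: $E^1$ denotes the set of fuzzy numbers: functions $u:\mathbb{R}\to[0,1]$ that are normal, fuzzy convex, upper semicontinuous, and have compact support $\overline{\{t:u(t)>0\}}$. For $\alpha\in(0,1]$ the $\alpha$-level set is $[u]_\alpha=\{t:u(t)\ge\alpha\}$ and $[u]_0=\overline{\{t:u(t)>0\}}$; each is a compact interval $[u^-_\alpha,u^+_\alpha]$. Addition and scalar multiplication are defined levelwise: $[u+v]_\alpha=[u^-_\alpha+v^-_\alpha,u^+_\alpha+v^+_\alpha]$ and $[ku]_\alpha=k[u]_\alpha$ for $k\in\mathbb{R}$. The metric is $D(u,v)=\sup_{\alpha\in[0,1]}\max\{|u^-_\alpha-v^-_\alpha|,|u^+_\alpha-v^+_\alpha|\}$. A series $\sum u_n$ of fuzzy numbers is $E_p$ summable to $\nu$ if its sequence of partial sums $(s_n)$ has Euler means $\frac{1}{(p+1)^n}\sum_{k=0}^n\binom{n}{k}p^{n-k}s_k$ converging to $\nu$ in $D$. *)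

theory Defs
  imports "HOL-Analysis.Analysis"
begin

definition fuzzy_number :: "(real \<Rightarrow> real) \<Rightarrow> bool" where
  "fuzzy_number u \<longleftrightarrow>
     (\<forall>t. 0 \<le> u t \<and> u t \<le> 1) \<and>
     (\<exists>t. u t = 1) \<and>
     (\<forall>x y l. 0 \<le> l \<and> l \<le> 1 \<longrightarrow> u (l * x + (1 - l) * y) \<ge> min (u x) (u y)) \<and>
     (\<forall>x e. e > 0 \<longrightarrow> (\<exists>d>0. \<forall>y. \<bar>y - x\<bar> < d \<longrightarrow> u y < u x + e)) \<and>
     compact (closure {t. u t > 0})"

definition level :: "(real \<Rightarrow> real) \<Rightarrow> real \<Rightarrow> real set" where
  "level u a = (if a = 0 then closure {t. u t > 0} else {t. u t \<ge> a})"

definition lower :: "(real \<Rightarrow> real) \<Rightarrow> real \<Rightarrow> real" where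
  "lower u a = Inf (level u a)"

definition upper :: "(real \<Rightarrow> real) \<Rightarrow> real \<Rightarrow> real" where
  "upper u a = Sup (level u a)"

text \<open>The membership function of the fuzzy number whose \<open>\<alpha>\<close>-levels are \<open>[L \<alpha>, R \<alpha>]\<close>.\<close>
definition fuzzy_of_levels :: "(real \<Rightarrow> real) \<Rightarrow> (real \<Rightarrow> real) \<Rightarrow> real \<Rightarrow> real" where
  "fuzzy_of_levels L R t = Sup ({0} \<union> {a. 0 < a \<and> a \<le> 1 \<and> L a \<le> t \<and> t \<le> R a})"

definition fadd :: "(real \<Rightarrow> real) \<Rightarrow> (real \<Rightarrow> real) \<Rightarrow> real \<Rightarrow> real" where
  "fadd u v = fuzzy_of_levels (\<lambda>a. lower u a + lower v a) (\<lambda>a. upper u a + upper v a)"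

definition fscale :: "real \<Rightarrow> (real \<Rightarrow> real) \<Rightarrow> real \<Rightarrow> real" where
  "fscale k u = fuzzy_of_levels (\<lambda>a. min (k * lower u a) (k * upper u a))
                                (\<lambda>a. max (k * lower u a) (k * upper u a))"

primrec fsum :: "(nat \<Rightarrow> real \<Rightarrow> real) \<Rightarrow> nat \<Rightarrow> real \<Rightarrow> real" where
  "fsum f 0 = f 0"
| "fsum f (Suc n) = fadd (fsum f n) (f (Suc n))"

definition fdist :: "(real \<Rightarrow> real) \<Rightarrow> (real \<Rightarrow> real) \<Rightarrow> real" where
  "fdist u v = (SUP a\<in>{0..1}. max \<bar>lower u a - lower v a\<bar> \<bar>upper u a - upper v a\<bar>)"

definition euler_mean :: "real \<Rightarrow> (nat \<Rightarrow> real \<Rightarrow> real) \<Rightarrow> nat \<Rightarrow> real \<Rightarrow> real" where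
  "euler_mean p u n = fscale (1 / (p + 1) ^ n)
     (fsum (\<lambda>k. fscale (real (n choose k) * p ^ (n - k)) (fsum u k)) n)"

end

theory Submission
  imports Defs "HOL-Real_Asymp.Real_Asymp"
begin

text \<open>
  A fuzzy number is determined by the endpoints \<open>\<alpha> \<mapsto> u\<^sup>-\<^sub>\<alpha>\<close> and \<open>\<alpha> \<mapsto> u\<^sup>+\<^sub>\<alpha>\<close> of its
  level intervals. These are monotone, left-continuous on \<open>(0, 1]\<close> and right-continuous at \<open>0\<close>,
  and conversely every such pair of functions is the pair of endpoints of the membership function
  \<open>fuzzy_of_levels L R\<close> that it generates. This class is closed under sums and nonnegative multiples, so levelwise
  arithmetic acts on endpoints exactly as on real numbers: the endpoints of the \<open>n\<close>-th Euler mean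
  are the convex combinations, with weights \<open>w\<^sub>n\<^sub>k = C(n,k) p\<^sup>n\<^sup>-\<^sup>k / (p+1)\<^sup>n\<close>, of the
  endpoints of the partial sums. Since \<open>D\<close> is a supremum of endpoint distances, this gives
  \<open>D(E\<^sub>n, \<nu>) \<le> \<Sum>\<^sub>k w\<^sub>n\<^sub>k D(s\<^sub>k, \<nu>)\<close>, and the right-hand side tends to \<open>0\<close> because the
  Euler weights form a regular summation matrix: they are nonnegative, each row sums to \<open>1\<close>, and
  each column tends to \<open>0\<close>.
\<close>

section \<open>Monotone functions and one-sided limits\<close>

lemma tendsto_at_left_mono_on:
  fixes f :: "real \<Rightarrow> real"
  assumes "c < a" "mono_on {c<..a} f" and approx: "\<And>y. y < f a \<Longrightarrow> \<exists>x\<in>{c<..<a}. y < f x"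
  shows "(f \<longlongrightarrow> f a) (at_left a)"
proof (rule order_tendstoI)
  fix y assume "y < f a"
  then obtain x where x: "x \<in> {c<..<a}" "y < f x" using approx by blast
  have "y < f z" if "z \<in> {x<..<a}" for z
    using x that mono_onD[OF assms(2), of x z] by auto
  then show "\<forall>\<^sub>F z in at_left a. y < f z"
    using eventually_at_left_real[of x a] x by (auto elim: eventually_mono)
next
  fix y assume "f a < y"
  have "f z < y" if "z \<in> {c<..<a}" for z
    using \<open>f a < y\<close> that mono_onD[OF assms(2), of z a] assms(1) by auto
  then show "\<forall>\<^sub>F z in at_left a. f z < y"
    using eventually_at_left_real[OF \<open>c < a\<close>] by (auto elim: eventually_mono)
qed

lemma tendsto_at_right_mono_on:
  fixes f :: "real \<Rightarrow> real"
  assumes "a < c" "mono_on {a..<c} f" and approx: "\<And>y. f a < y \<Longrightarrow> \<exists>x\<in>{a<..<c}. f x < y"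
  shows "(f \<longlongrightarrow> f a) (at_right a)"
proof (rule order_tendstoI)
  fix y assume "y < f a"
  have "y < f z" if "z \<in> {a<..<c}" for z
    using \<open>y < f a\<close> that mono_onD[OF assms(2), of a z] assms(1) by auto
  then show "\<forall>\<^sub>F z in at_right a. y < f z"
    using eventually_at_right_real[OF \<open>a < c\<close>] by (auto elim: eventually_mono)
next
  fix y assume "f a < y"
  then obtain x where x: "x \<in> {a<..<c}" "f x < y" using approx by blast
  have "f z < y" if "z \<in> {a<..<x}" for z
    using x that mono_onD[OF assms(2), of z x] by auto
  then show "\<forall>\<^sub>F z in at_right a. f z < y"
    using eventually_at_right_real[of a x] x by (auto elim: eventually_mono)
qed

section \<open>Admissible endpoint functions\<close>

definition admissible_endpoints :: "(real \<Rightarrow> real) \<Rightarrow> (real \<Rightarrow> real) \<Rightarrow> bool" where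
  "admissible_endpoints L R \<longleftrightarrow>
     (\<forall>a\<in>{0..1}. \<forall>b\<in>{0..1}. a \<le> b \<longrightarrow> L a \<le> L b \<and> R b \<le> R a) \<and> L 1 \<le> R 1 \<and>
     (\<forall>a\<in>{0<..1}. (L \<longlongrightarrow> L a) (at_left a) \<and> (R \<longlongrightarrow> R a) (at_left a)) \<and>
     (L \<longlongrightarrow> L 0) (at_right 0) \<and> (R \<longlongrightarrow> R 0) (at_right 0)"

lemma admissible_endpoints_mono:
  assumes "admissible_endpoints L R" "0 \<le> a" "a \<le> b" "b \<le> 1"
  shows "L a \<le> L b" "R b \<le> R a"
  using assms unfolding admissible_endpoints_def by auto

lemma admissible_endpoints_order:
  assumes "admissible_endpoints L R" "0 \<le> a" "a \<le> 1"
  shows "L 0 \<le> L a" "L a \<le> R a" "R a \<le> R 0"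
proof -
  have "L 1 \<le> R 1" using assms(1) unfolding admissible_endpoints_def by blast
  then show "L 0 \<le> L a" "L a \<le> R a" "R a \<le> R 0"
    using admissible_endpoints_mono[OF assms(1), of 0 a] admissible_endpoints_mono[OF assms(1), of a 1]
      assms(2,3) by linarith+
qed

lemma admissible_endpoints_cong:
  assumes "admissible_endpoints L R" and "\<And>a. 0 \<le> a \<Longrightarrow> a \<le> 1 \<Longrightarrow> L' a = L a \<and> R' a = R a"
  shows "admissible_endpoints L' R'"
proof -
  have left: "\<forall>\<^sub>F b in at_left a. L' b = L b \<and> R' b = R b" if "0 < a" "a \<le> 1" for a
    by (rule eventually_mono[OF eventually_at_left_real[OF \<open>0 < a\<close>]]) (use assms(2) that in auto)
  have right: "\<forall>\<^sub>F b in at_right 0. L' b = L b \<and> R' b = R b"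
    by (rule eventually_mono[OF eventually_at_right_real[of 0 1]]) (use assms(2) in auto)
  have "(L' \<longlongrightarrow> L' a) (at_left a) \<and> (R' \<longlongrightarrow> R' a) (at_left a)" if "a \<in> {0<..1}" for a
  proof -
    have "(L \<longlongrightarrow> L a) (at_left a)" "(R \<longlongrightarrow> R a) (at_left a)"
      using assms(1) that unfolding admissible_endpoints_def by auto
    then show ?thesis using left[of a] assms(2)[of a] that
      by (auto elim!: tendsto_cong[THEN iffD1, rotated] eventually_mono)
  qed
  moreover have "(L' \<longlongrightarrow> L' 0) (at_right 0) \<and> (R' \<longlongrightarrow> R' 0) (at_right 0)"
  proof -
    have "(L \<longlongrightarrow> L 0) (at_right 0)" "(R \<longlongrightarrow> R 0) (at_right 0)"
      using assms(1) unfolding admissible_endpoints_def by auto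
    then show ?thesis using right assms(2)[of 0]
      by (auto elim!: tendsto_cong[THEN iffD1, rotated] eventually_mono)
  qed
  ultimately show ?thesis
    using assms unfolding admissible_endpoints_def by (simp add: Ball_def)
qed

lemma admissible_endpoints_add:
  assumes "admissible_endpoints L1 R1" "admissible_endpoints L2 R2"
  shows "admissible_endpoints (\<lambda>a. L1 a + L2 a) (\<lambda>a. R1 a + R2 a)"
  using assms unfolding admissible_endpoints_def by (auto intro!: add_mono tendsto_add)

lemma admissible_endpoints_scale:
  assumes "admissible_endpoints L R" "0 \<le> k"
  shows "admissible_endpoints (\<lambda>a. k * L a) (\<lambda>a. k * R a)"
  using assms unfolding admissible_endpoints_def by (auto intro!: mult_left_mono tendsto_mult_left)

lemma admissible_endpoints_notin_interval_below:
  assumes "admissible_endpoints L R" "0 < a" "a \<le> 1" "t \<notin> {L a..R a}"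
  obtains b where "0 < b" "b < a" "t \<notin> {L b..R b}"
proof -
  have L: "(L \<longlongrightarrow> L a) (at_left a)" and R: "(R \<longlongrightarrow> R a) (at_left a)"
    using assms(1-3) unfolding admissible_endpoints_def by auto
  from assms(4) consider "t < L a" | "R a < t" by fastforce
  then have "\<forall>\<^sub>F b in at_left a. t < L b \<or> R b < t"
  proof cases
    case 1
    show ?thesis using order_tendstoD(1)[OF L 1] by (rule eventually_mono) simp
  next
    case 2
    show ?thesis using order_tendstoD(2)[OF R 2] by (rule eventually_mono) simp
  qed
  with eventually_at_left_real[OF assms(2)] have "\<forall>\<^sub>F b in at_left a. b \<in> {0<..<a} \<and> t \<notin> {L b..R b}"
    by eventually_elim auto
  then show ?thesis using eventually_happens'[OF trivial_limit_at_left_real] that by auto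
qed

lemma level_fuzzy_of_levels:
  assumes "admissible_endpoints L R" "0 < a" "a \<le> 1"
  shows "{t. a \<le> fuzzy_of_levels L R t} = {L a..R a}"
proof (intro set_eqI iffI)
  fix t
  define S where "S = {0} \<union> {b. 0 < b \<and> b \<le> 1 \<and> L b \<le> t \<and> t \<le> R b}"
  have S: "fuzzy_of_levels L R t = Sup S" "bdd_above S" "S \<noteq> {}"
    unfolding S_def fuzzy_of_levels_def by (auto intro: bdd_aboveI[of _ 1])
  show "t \<in> {t. a \<le> fuzzy_of_levels L R t}" if "t \<in> {L a..R a}"
    using that assms(2,3) S by (auto intro!: cSup_upper simp: S_def)
  show "t \<in> {L a..R a}" if "t \<in> {t. a \<le> fuzzy_of_levels L R t}"
  proof (rule ccontr)
    assume "t \<notin> {L a..R a}"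
    then obtain b where b: "0 < b" "b < a" "t \<notin> {L b..R b}"
      using admissible_endpoints_notin_interval_below assms by blast
    have "c \<le> b" if "c \<in> S" for c
      using that b admissible_endpoints_mono[OF assms(1), of b c] by (force simp: S_def)
    then have "Sup S \<le> b" using S by (auto intro: cSup_least)
    then show False using that S b by auto
  qed
qed

lemma support_fuzzy_of_levels:
  "{t. 0 < fuzzy_of_levels L R t} = (\<Union>b\<in>{0<..1}. {L b..R b})"
proof (intro set_eqI)
  fix t
  define S where "S = {0} \<union> {b. 0 < b \<and> b \<le> 1 \<and> L b \<le> t \<and> t \<le> R b}"
  have "fuzzy_of_levels L R t = Sup S" "bdd_above S" "S \<noteq> {}"
    unfolding S_def fuzzy_of_levels_def by (auto intro: bdd_aboveI[of _ 1])
  then have "0 < fuzzy_of_levels L R t \<longleftrightarrow> (\<exists>b\<in>S. 0 < b)"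
    by (simp add: less_cSup_iff)
  then show "t \<in> {t. 0 < fuzzy_of_levels L R t} \<longleftrightarrow> t \<in> (\<Union>b\<in>{0<..1}. {L b..R b})"
    by (auto simp: S_def)
qed

lemma endpoints_0_fuzzy_of_levels:
  assumes "admissible_endpoints L R"
  shows "Inf (level (fuzzy_of_levels L R) 0) = L 0" "Sup (level (fuzzy_of_levels L R) 0) = R 0"
proof -
  define U where "U = (\<Union>b\<in>{0<..1}. {L b..R b})"
  have "U \<subseteq> {L 0..R 0}"
  proof
    fix t assume "t \<in> U"
    then obtain b where "b \<in> {0<..1}" "L b \<le> t" "t \<le> R b" unfolding U_def by auto
    then show "t \<in> {L 0..R 0}"
      using admissible_endpoints_order(1,3)[OF assms, of b] by auto
  qed
  then have sub: "closure U \<subseteq> {L 0..R 0}" by (simp add: closure_minimal)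
  have "L b \<in> closure U \<and> R b \<in> closure U" if "b \<in> {0<..<1}" for b
  proof -
    have "{L b..R b} \<subseteq> U" unfolding U_def by (rule UN_upper) (use that in auto)
    then show ?thesis
      using admissible_endpoints_order(2)[OF assms, of b] that closure_subset[of U] by auto
  qed
  then have ev: "\<forall>\<^sub>F b in at_right 0. L b \<in> closure U \<and> R b \<in> closure U"
    using eventually_at_right_real[of 0 1] by (auto elim: eventually_mono)
  have "(L \<longlongrightarrow> L 0) (at_right 0)" "(R \<longlongrightarrow> R 0) (at_right 0)"
    using assms unfolding admissible_endpoints_def by auto
  then have "L 0 \<in> closure U" "R 0 \<in> closure U"
    using Lim_in_closed_set[OF closed_closure eventually_conj_iff[THEN iffD1, OF ev, THEN conjunct1]]
      Lim_in_closed_set[OF closed_closure eventually_conj_iff[THEN iffD1, OF ev, THEN conjunct2]]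
    by auto
  then have "Inf (closure U) = L 0" "Sup (closure U) = R 0"
    using sub by (force intro: cInf_eq_minimum, force intro: cSup_eq_maximum)
  then show "Inf (level (fuzzy_of_levels L R) 0) = L 0" "Sup (level (fuzzy_of_levels L R) 0) = R 0"
    unfolding level_def U_def support_fuzzy_of_levels by simp_all
qed

lemma endpoints_fuzzy_of_levels:
  assumes "admissible_endpoints L R" "0 \<le> a" "a \<le> 1"
  shows "lower (fuzzy_of_levels L R) a = L a" "upper (fuzzy_of_levels L R) a = R a"
proof -
  have "level (fuzzy_of_levels L R) a = {L a..R a}" if "a \<noteq> 0"
    using level_fuzzy_of_levels[OF assms(1)] assms that unfolding level_def by auto
  then show "lower (fuzzy_of_levels L R) a = L a" "upper (fuzzy_of_levels L R) a = R a"
    using endpoints_0_fuzzy_of_levels[OF assms(1)] admissible_endpoints_order(2)[OF assms]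
    unfolding lower_def upper_def by (cases "a = 0"; simp)+
qed

abbreviation admissible_levels :: "(real \<Rightarrow> real) \<Rightarrow> bool" where
  "admissible_levels u \<equiv> admissible_endpoints (lower u) (upper u)"

section \<open>Level sets of fuzzy numbers\<close>

lemma level_antimono:
  assumes "0 \<le> a" "a \<le> b"
  shows "level u b \<subseteq> level u a"
  using assms closure_subset[of "{t. 0 < u t}"] by (auto simp: level_def)

lemma level_eq_Inter:
  assumes "0 < a"
  shows "level u a = (\<Inter>b\<in>{0<..<a}. level u b)"
proof -
  have "a \<le> u t \<longleftrightarrow> (\<forall>b\<in>{0<..<a}. b \<le> u t)" for t
    using dense_le_bounded[OF assms, of "u t"] by (force simp: less_imp_le)
  then show ?thesis using assms by (auto simp: level_def)
qed

lemma support_eq_Union: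
  assumes "\<And>t. u t \<le> 1"
  shows "{t. 0 < u t} = (\<Union>b\<in>{0<..<1}. level u b)"
proof (intro set_eqI iffI)
  fix t assume "t \<in> {t. 0 < u t}"
  then have "u t / 2 \<in> {0<..<1}" "t \<in> level u (u t / 2)"
    using assms[of t] by (auto simp: level_def)
  then show "t \<in> (\<Union>b\<in>{0<..<1}. level u b)" by blast
qed (auto simp: level_def)

lemma fuzzy_number_level_bounded:
  assumes "fuzzy_number u" "0 \<le> a"
  shows "bounded (level u a)"
proof -
  have "bounded (level u 0)"
    using assms(1) compact_imp_bounded unfolding fuzzy_number_def level_def by auto
  then show ?thesis using level_antimono[OF order_refl assms(2)] by (rule bounded_subset)
qed

lemma fuzzy_number_level_nonempty:
  assumes "fuzzy_number u" "0 \<le> a" "a \<le> 1"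
  shows "level u a \<noteq> {}"
proof -
  obtain t where "u t = 1" using assms(1) unfolding fuzzy_number_def by blast
  then have "t \<in> level u 1" by (simp add: level_def)
  then show ?thesis using level_antimono[OF assms(2,3)] by blast
qed

lemma fuzzy_number_level_closed:
  assumes "fuzzy_number u" "0 < a"
  shows "closed (level u a)"
proof -
  have usc: "\<And>x e. e > 0 \<Longrightarrow> \<exists>d>0. \<forall>y. \<bar>y - x\<bar> < d \<longrightarrow> u y < u x + e"
    using assms(1) unfolding fuzzy_number_def by blast
  have "open {t. u t < a}"
    unfolding open_dist
  proof (intro ballI)
    fix x assume "x \<in> {t. u t < a}"
    with usc[of "a - u x" x] obtain d where "d > 0" "\<forall>y. \<bar>y - x\<bar> < d \<longrightarrow> u y < a" by auto
    then show "\<exists>e>0. \<forall>y. dist y x < e \<longrightarrow> y \<in> {t. u t < a}" by (auto simp: dist_real_def)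
  qed
  moreover have "level u a = - {t. u t < a}" using assms(2) by (auto simp: level_def)
  ultimately show ?thesis by (simp add: closed_def)
qed

lemma fuzzy_number_quasiconcave:
  assumes "fuzzy_number u" "0 \<le> l" "l \<le> 1"
  shows "min (u x) (u y) \<le> u ((1 - l) * x + l * y)"
proof -
  have "\<forall>x y l. 0 \<le> l \<and> l \<le> 1 \<longrightarrow> min (u x) (u y) \<le> u (l * x + (1 - l) * y)"
    using assms(1) unfolding fuzzy_number_def by blast
  from this[rule_format, of "1 - l" x y] show ?thesis using assms(2,3) by simp
qed

lemma fuzzy_number_level_convex:
  assumes "fuzzy_number u"
  shows "convex (level u a)"
proof -
  have "convex {t. c \<le> u t}" for c
    unfolding convex_alt
  proof (intro ballI allI impI)
    fix x y l :: real assume "x \<in> {t. c \<le> u t}" "y \<in> {t. c \<le> u t}" "0 \<le> l \<and> l \<le> 1"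
    then show "(1 - l) *\<^sub>R x + l *\<^sub>R y \<in> {t. c \<le> u t}"
      using fuzzy_number_quasiconcave[OF assms, of l x y] by simp
  qed
  moreover have "convex {t. 0 < u t}"
    unfolding convex_alt
  proof (intro ballI allI impI)
    fix x y l :: real assume "x \<in> {t. 0 < u t}" "y \<in> {t. 0 < u t}" "0 \<le> l \<and> l \<le> 1"
    then show "(1 - l) *\<^sub>R x + l *\<^sub>R y \<in> {t. 0 < u t}"
      using fuzzy_number_quasiconcave[OF assms, of l x y] by simp
  qed
  ultimately show ?thesis by (simp add: level_def convex_closure)
qed

lemma fuzzy_number_level_eq:
  assumes "fuzzy_number u" "0 < a" "a \<le> 1"
  shows "level u a = {lower u a..upper u a}"
proof -
  have "connected (level u a) \<and> compact (level u a)"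
    using assms fuzzy_number_level_closed fuzzy_number_level_bounded fuzzy_number_level_convex
    by (simp add: convex_connected compact_eq_bounded_closed)
  then obtain c d where cd: "level u a = {c..d}" by (auto simp: connected_compact_interval_1)
  moreover have "level u a \<noteq> {}" using fuzzy_number_level_nonempty[OF assms(1)] assms(2,3) by simp
  ultimately have "c \<le> d" by simp
  then show ?thesis using cd by (simp add: lower_def upper_def)
qed

lemma fuzzy_number_endpoints_mono:
  assumes "fuzzy_number u" "0 \<le> a" "a \<le> b" "b \<le> 1"
  shows "lower u a \<le> lower u b" "upper u b \<le> upper u a"
proof -
  have ne: "level u b \<noteq> {}" using fuzzy_number_level_nonempty assms by simp
  have "bounded (level u a)" using fuzzy_number_level_bounded assms by simp
  then have bdd: "bdd_below (level u a)" "bdd_above (level u a)"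
    by (simp_all add: bounded_imp_bdd_below bounded_imp_bdd_above)
  have sub: "level u b \<subseteq> level u a" using level_antimono[OF assms(2,3)] .
  show "lower u a \<le> lower u b" unfolding lower_def by (rule cInf_superset_mono[OF ne bdd(1) sub])
  show "upper u b \<le> upper u a" unfolding upper_def by (rule cSup_subset_mono[OF ne bdd(2) sub])
qed

text \<open>The upper endpoint is antitone; negating it lets the one-sided limit lemmas for monotone
  functions treat both endpoints alike.\<close>

lemma fuzzy_number_endpoints_mono_on:
  assumes "fuzzy_number u"
  shows "mono_on {0..1} (lower u)" "mono_on {0..1} (\<lambda>b. - upper u b)"
  by (rule mono_onI, rule fuzzy_number_endpoints_mono(1)[OF assms]; simp)
    (rule mono_onI, simp, rule fuzzy_number_endpoints_mono(2)[OF assms]; simp)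

lemma fuzzy_number_lower_le_upper:
  assumes "fuzzy_number u" "0 \<le> a" "a \<le> 1"
  shows "lower u a \<le> upper u a"
proof -
  have "bounded (level u a)" using fuzzy_number_level_bounded assms by simp
  then show ?thesis
    unfolding lower_def upper_def
    by (intro cInf_le_cSup fuzzy_number_level_nonempty[OF assms] bounded_imp_bdd_below bounded_imp_bdd_above)
qed

lemma fuzzy_number_notin_interval_below:
  assumes u: "fuzzy_number u" and a: "0 < a" "a \<le> 1" and y: "y \<notin> {lower u a..upper u a}"
  obtains b where "0 < b" "b < a" "y \<notin> {lower u b..upper u b}"
proof -
  have "y \<notin> level u a" using y fuzzy_number_level_eq[OF u a] by simp
  then obtain b where "b \<in> {0<..<a}" "y \<notin> level u b" unfolding level_eq_Inter[OF a(1)] by blast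
  then show ?thesis using that fuzzy_number_level_eq[OF u, of b] a by auto
qed

lemma fuzzy_number_endpoints_approx_at_0:
  assumes u: "fuzzy_number u"
  shows "lower u 0 < y \<Longrightarrow> \<exists>b\<in>{0<..<1}. lower u b < y"
    and "y < upper u 0 \<Longrightarrow> \<exists>b\<in>{0<..<1}. y < upper u b"
proof -
  have "\<And>t. u t \<le> 1" using u unfolding fuzzy_number_def by blast
  then have "{t. 0 < u t} = (\<Union>b\<in>{0<..<1}. level u b)" by (rule support_eq_Union)
  also have "\<dots> = (\<Union>b\<in>{0<..<1}. {lower u b..upper u b})"
    using fuzzy_number_level_eq[OF u] by (intro SUP_cong) auto
  finally have level0: "level u 0 = closure (\<Union>b\<in>{0<..<1}. {lower u b..upper u b})"
    by (simp add: level_def)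
  have ne: "level u 0 \<noteq> {}" using fuzzy_number_level_nonempty[OF u] by simp
  show "\<exists>b\<in>{0<..<1}. lower u b < y" if y: "lower u 0 < y"
  proof (rule ccontr)
    assume "\<not> ?thesis"
    then have "level u 0 \<subseteq> {y..}" unfolding level0 by (intro closure_minimal) force+
    then have "y \<le> lower u 0" using ne unfolding lower_def by (auto intro: cInf_greatest)
    then show False using y by simp
  qed
  show "\<exists>b\<in>{0<..<1}. y < upper u b" if y: "y < upper u 0"
  proof (rule ccontr)
    assume "\<not> ?thesis"
    then have "level u 0 \<subseteq> {..y}" unfolding level0 by (intro closure_minimal) force+
    then have "upper u 0 \<le> y" using ne unfolding upper_def by (auto intro: cSup_least)
    then show False using y by simp
  qed
qed

lemma fuzzy_number_endpoints_continuous_left: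
  assumes u: "fuzzy_number u" and a: "0 < a" "a \<le> 1"
  shows "(lower u \<longlongrightarrow> lower u a) (at_left a)" "(upper u \<longlongrightarrow> upper u a) (at_left a)"
proof -
  have le: "lower u a \<le> upper u a" "upper u a \<le> upper u b" "lower u b \<le> lower u a"
    if "b \<in> {0<..<a}" for b
    using fuzzy_number_lower_le_upper[OF u] fuzzy_number_endpoints_mono[OF u, of b a] a that by auto
  show "(lower u \<longlongrightarrow> lower u a) (at_left a)"
  proof (rule tendsto_at_left_mono_on[OF a(1) mono_on_subset[OF fuzzy_number_endpoints_mono_on(1)[OF u]]])
    fix y assume "y < lower u a"
    then obtain b where "b \<in> {0<..<a}" "y \<notin> {lower u b..upper u b}"
      using fuzzy_number_notin_interval_below[OF u a, of y] by auto
    moreover have "y < lower u b"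
      using calculation le[of b] \<open>y < lower u a\<close> by auto
    ultimately show "\<exists>b\<in>{0<..<a}. y < lower u b" by blast
  qed (use a in auto)
  have "((\<lambda>b. - upper u b) \<longlongrightarrow> - upper u a) (at_left a)"
  proof (rule tendsto_at_left_mono_on[OF a(1) mono_on_subset[OF fuzzy_number_endpoints_mono_on(2)[OF u]]])
    fix y assume "y < - upper u a"
    then obtain b where "b \<in> {0<..<a}" "- y \<notin> {lower u b..upper u b}"
      using fuzzy_number_notin_interval_below[OF u a, of "- y"] by auto
    moreover have "y < - upper u b"
      using calculation le[of b] \<open>y < - upper u a\<close> by auto
    ultimately show "\<exists>b\<in>{0<..<a}. y < - upper u b" by blast
  qed (use a in auto)
  then show "(upper u \<longlongrightarrow> upper u a) (at_left a)"
    by (simp add: tendsto_minus_cancel_left[symmetric])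
qed

lemma fuzzy_number_endpoints_continuous_right_0:
  assumes u: "fuzzy_number u"
  shows "(lower u \<longlongrightarrow> lower u 0) (at_right 0)" "(upper u \<longlongrightarrow> upper u 0) (at_right 0)"
proof -
  show "(lower u \<longlongrightarrow> lower u 0) (at_right 0)"
    by (rule tendsto_at_right_mono_on[OF zero_less_one mono_on_subset[OF fuzzy_number_endpoints_mono_on(1)[OF u]]])
      (use fuzzy_number_endpoints_approx_at_0(1)[OF u] in auto)
  have "((\<lambda>b. - upper u b) \<longlongrightarrow> - upper u 0) (at_right 0)"
    by (rule tendsto_at_right_mono_on[OF zero_less_one mono_on_subset[OF fuzzy_number_endpoints_mono_on(2)[OF u]]])
      (use fuzzy_number_endpoints_approx_at_0(2)[OF u] in \<open>auto simp: minus_less_iff\<close>)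
  then show "(upper u \<longlongrightarrow> upper u 0) (at_right 0)"
    by (simp add: tendsto_minus_cancel_left[symmetric])
qed

lemma fuzzy_number_admissible:
  assumes "fuzzy_number u"
  shows "admissible_levels u"
proof -
  have "\<forall>a\<in>{0..1}. \<forall>b\<in>{0..1}. a \<le> b \<longrightarrow> lower u a \<le> lower u b \<and> upper u b \<le> upper u a"
    using fuzzy_number_endpoints_mono[OF assms] by simp
  moreover have "\<forall>a\<in>{0<..1}. (lower u \<longlongrightarrow> lower u a) (at_left a) \<and> (upper u \<longlongrightarrow> upper u a) (at_left a)"
    using fuzzy_number_endpoints_continuous_left[OF assms] by simp
  ultimately show ?thesis
    unfolding admissible_endpoints_def
    using fuzzy_number_lower_le_upper[OF assms, of 1] fuzzy_number_endpoints_continuous_right_0[OF assms]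
    by simp
qed

section \<open>Levelwise arithmetic and the metric\<close>

lemma endpoints_fadd:
  assumes "admissible_levels u" "admissible_levels v" "0 \<le> a" "a \<le> 1"
  shows "lower (fadd u v) a = lower u a + lower v a" "upper (fadd u v) a = upper u a + upper v a"
  using endpoints_fuzzy_of_levels[OF admissible_endpoints_add[OF assms(1,2)] assms(3,4)]
  unfolding fadd_def by simp_all

lemma admissible_levels_fadd:
  assumes "admissible_levels u" "admissible_levels v"
  shows "admissible_levels (fadd u v)"
  by (rule admissible_endpoints_cong[OF admissible_endpoints_add[OF assms]]) (simp add: endpoints_fadd assms)

lemma endpoints_fscale:
  assumes "admissible_levels u" "0 \<le> k" "0 \<le> a" "a \<le> 1"
  shows "lower (fscale k u) a = k * lower u a" "upper (fscale k u) a = k * upper u a"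
proof -
  have ordered: "k * lower u b \<le> k * upper u b" if "0 \<le> b" "b \<le> 1" for b
    using admissible_endpoints_order(2)[OF assms(1) that] assms(2) by (rule mult_left_mono)
  have "admissible_endpoints (\<lambda>b. min (k * lower u b) (k * upper u b)) (\<lambda>b. max (k * lower u b) (k * upper u b))"
    by (rule admissible_endpoints_cong[OF admissible_endpoints_scale[OF assms(1,2)]]) (simp add: ordered)
  from endpoints_fuzzy_of_levels[OF this assms(3,4)]
  show "lower (fscale k u) a = k * lower u a" "upper (fscale k u) a = k * upper u a"
    unfolding fscale_def using ordered[OF assms(3,4)] by simp_all
qed

lemma admissible_levels_fscale:
  assumes "admissible_levels u" "0 \<le> k"
  shows "admissible_levels (fscale k u)"
  by (rule admissible_endpoints_cong[OF admissible_endpoints_scale[OF assms]]) (simp add: endpoints_fscale assms)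

lemma admissible_levels_fsum:
  assumes "\<And>i. admissible_levels (f i)"
  shows "admissible_levels (fsum f n)"
  by (induction n) (simp_all add: assms admissible_levels_fadd)

lemma endpoints_fsum:
  assumes "\<And>i. admissible_levels (f i)" "0 \<le> a" "a \<le> 1"
  shows "lower (fsum f n) a = (\<Sum>i\<le>n. lower (f i) a)" "upper (fsum f n) a = (\<Sum>i\<le>n. upper (f i) a)"
  by (induction n) (simp_all add: assms endpoints_fadd admissible_levels_fsum)

lemma fdist_ge_endpoints:
  assumes "admissible_levels x" "admissible_levels y" "0 \<le> a" "a \<le> 1"
  shows "\<bar>lower x a - lower y a\<bar> \<le> fdist x y" "\<bar>upper x a - upper y a\<bar> \<le> fdist x y"
proof -
  define B where "B = (\<bar>lower x 0\<bar> + \<bar>upper x 0\<bar>) + (\<bar>lower y 0\<bar> + \<bar>upper y 0\<bar>)"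
  have "max \<bar>lower x b - lower y b\<bar> \<bar>upper x b - upper y b\<bar> \<le> B" if "b \<in> {0..1}" for b
    using that admissible_endpoints_order[OF assms(1), of b] admissible_endpoints_order[OF assms(2), of b]
    unfolding B_def by auto
  then have "bdd_above ((\<lambda>b. max \<bar>lower x b - lower y b\<bar> \<bar>upper x b - upper y b\<bar>) ` {0..1})"
    by (rule bdd_aboveI2)
  from cSUP_upper[OF _ this, of a] assms(3,4)
  show "\<bar>lower x a - lower y a\<bar> \<le> fdist x y" "\<bar>upper x a - upper y a\<bar> \<le> fdist x y"
    unfolding fdist_def by auto
qed

lemma fdist_nonneg:
  assumes "admissible_levels x" "admissible_levels y"
  shows "0 \<le> fdist x y"
  using fdist_ge_endpoints(1)[OF assms, of 0] by simp

lemma fdist_le: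
  assumes "\<And>a. 0 \<le> a \<Longrightarrow> a \<le> 1 \<Longrightarrow> \<bar>lower x a - lower y a\<bar> \<le> B"
    and "\<And>a. 0 \<le> a \<Longrightarrow> a \<le> 1 \<Longrightarrow> \<bar>upper x a - upper y a\<bar> \<le> B"
  shows "fdist x y \<le> B"
  unfolding fdist_def by (rule cSUP_least) (use assms in auto)

lemma convex_combination_dist_le:
  fixes w X d :: "'i \<Rightarrow> real"
  assumes "(\<Sum>k\<in>I. w k) = 1" "\<And>k. k \<in> I \<Longrightarrow> 0 \<le> w k" "\<And>k. k \<in> I \<Longrightarrow> \<bar>X k - Y\<bar> \<le> d k"
  shows "\<bar>(\<Sum>k\<in>I. w k * X k) - Y\<bar> \<le> (\<Sum>k\<in>I. w k * d k)"
proof -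
  have "(\<Sum>k\<in>I. w k * X k) - Y = (\<Sum>k\<in>I. w k * (X k - Y))"
    using assms(1) by (simp add: right_diff_distrib sum_subtractf flip: sum_distrib_right)
  also have "\<bar>\<dots>\<bar> \<le> (\<Sum>k\<in>I. w k * \<bar>X k - Y\<bar>)"
    using sum_abs[of "\<lambda>k. w k * (X k - Y)" I] assms(2) by (simp add: abs_mult)
  also have "\<dots> \<le> (\<Sum>k\<in>I. w k * d k)"
    using assms(2,3) by (intro sum_mono mult_left_mono) auto
  finally show ?thesis .
qed

lemma fdist_convex_combination_le:
  fixes w :: "'i \<Rightarrow> real"
  assumes "admissible_levels y" "\<And>k. k \<in> I \<Longrightarrow> admissible_levels (x k)"
    and "\<And>k. k \<in> I \<Longrightarrow> 0 \<le> w k" "(\<Sum>k\<in>I. w k) = 1"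
    and "\<And>a. 0 \<le> a \<Longrightarrow> a \<le> 1 \<Longrightarrow> lower z a = (\<Sum>k\<in>I. w k * lower (x k) a)"
    and "\<And>a. 0 \<le> a \<Longrightarrow> a \<le> 1 \<Longrightarrow> upper z a = (\<Sum>k\<in>I. w k * upper (x k) a)"
  shows "fdist z y \<le> (\<Sum>k\<in>I. w k * fdist (x k) y)"
proof (rule fdist_le)
  fix a :: real assume a: "0 \<le> a" "a \<le> 1"
  show "\<bar>lower z a - lower y a\<bar> \<le> (\<Sum>k\<in>I. w k * fdist (x k) y)"
    unfolding assms(5)[OF a]
    by (rule convex_combination_dist_le[OF assms(4)])
      (simp_all add: assms(3) fdist_ge_endpoints(1)[OF assms(2) assms(1) a])
  show "\<bar>upper z a - upper y a\<bar> \<le> (\<Sum>k\<in>I. w k * fdist (x k) y)"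
    unfolding assms(6)[OF a]
    by (rule convex_combination_dist_le[OF assms(4)])
      (simp_all add: assms(3) fdist_ge_endpoints(2)[OF assms(2) assms(1) a])
qed

section \<open>Euler summability\<close>

lemma weighted_means_tendsto_zero:
  fixes w :: "nat \<Rightarrow> nat \<Rightarrow> real" and d :: "nat \<Rightarrow> real"
  assumes w_nonneg: "\<And>n k. 0 \<le> w n k" and w_sum: "\<And>n. (\<Sum>k\<le>n. w n k) \<le> 1"
    and w_column: "\<And>k. (\<lambda>n. w n k) \<longlonglongrightarrow> 0" and d: "d \<longlonglongrightarrow> 0"
  shows "(\<lambda>n. \<Sum>k\<le>n. w n k * d k) \<longlonglongrightarrow> 0"
proof (rule LIMSEQ_I)
  fix r :: real assume "0 < r"
  from LIMSEQ_D[OF d, of "r / 2"] \<open>0 < r\<close> obtain N where N: "\<And>k. N \<le> k \<Longrightarrow> \<bar>d k\<bar> < r / 2"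
    by auto
  \<comment> \<open>the first \<open>N\<close> terms vanish by column convergence, the others are below \<open>r / 2\<close> in total\<close>
  have "(\<lambda>n. \<Sum>k<N. w n k * \<bar>d k\<bar>) \<longlonglongrightarrow> 0"
    by (intro tendsto_null_sum tendsto_mult_left_zero w_column)
  from LIMSEQ_D[OF this, of "r / 2"] \<open>0 < r\<close>
  obtain M where "\<forall>n\<ge>M. \<bar>\<Sum>k<N. w n k * \<bar>d k\<bar>\<bar> < r / 2"
    by auto
  then have M: "\<And>n. M \<le> n \<Longrightarrow> (\<Sum>k<N. w n k * \<bar>d k\<bar>) < r / 2"
    by (meson abs_ge_self le_less_trans)
  have "\<bar>\<Sum>k\<le>n. w n k * d k\<bar> < r" if "M \<le> n" for n
  proof -
    have head: "(\<Sum>k\<le>n. if k < N then w n k * \<bar>d k\<bar> else 0) \<le> (\<Sum>k<N. w n k * \<bar>d k\<bar>)"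
    proof -
      have "(\<Sum>k\<le>n. if k < N then w n k * \<bar>d k\<bar> else 0) = (\<Sum>k\<in>{..n} \<inter> {..<N}. w n k * \<bar>d k\<bar>)"
        using sum.inter_restrict[of "{..n}" "\<lambda>k. w n k * \<bar>d k\<bar>" "{..<N}"] by simp
      also have "\<dots> \<le> (\<Sum>k<N. w n k * \<bar>d k\<bar>)"
        using w_nonneg by (intro sum_mono2) auto
      finally show ?thesis .
    qed
    have tail: "w n k * \<bar>d k\<bar> \<le> (if k < N then w n k * \<bar>d k\<bar> else 0) + w n k * (r / 2)" for k
    proof (cases "k < N")
      case False
      then have "\<bar>d k\<bar> \<le> r / 2" using N[of k] by simp
      from mult_left_mono[OF this w_nonneg[of n k]] show ?thesis using False by simp
    qed (use w_nonneg[of n k] \<open>0 < r\<close> in simp)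
    have "\<bar>\<Sum>k\<le>n. w n k * d k\<bar> \<le> (\<Sum>k\<le>n. w n k * \<bar>d k\<bar>)"
      using sum_abs[of "\<lambda>k. w n k * d k" "{..n}"] w_nonneg by (simp add: abs_mult)
    also have "\<dots> \<le> (\<Sum>k\<le>n. (if k < N then w n k * \<bar>d k\<bar> else 0) + w n k * (r / 2))"
      by (intro sum_mono tail)
    also have "\<dots> = (\<Sum>k\<le>n. if k < N then w n k * \<bar>d k\<bar> else 0) + (\<Sum>k\<le>n. w n k) * (r / 2)"
      by (simp add: sum.distrib sum_distrib_right)
    also have "(\<Sum>k\<le>n. w n k) * (r / 2) \<le> r / 2"
      using w_sum[of n] \<open>0 < r\<close> by (simp add: mult_left_le_one_le)
    finally show ?thesis using head M[OF that] by linarith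
  qed
  then show "\<exists>M. \<forall>n\<ge>M. norm ((\<Sum>k\<le>n. w n k * d k) - 0) < r" by auto
qed

lemma polynomial_times_geometric_tendsto_zero:
  fixes r :: real
  assumes "0 < r" "r < 1"
  shows "(\<lambda>n. real n ^ k * r ^ n) \<longlonglongrightarrow> 0"
  using assms by real_asymp

definition euler_weight :: "real \<Rightarrow> nat \<Rightarrow> nat \<Rightarrow> real" where
  "euler_weight p n k = real (n choose k) * p ^ (n - k) / (p + 1) ^ n"

lemma euler_weight_nonneg: "0 \<le> p \<Longrightarrow> 0 \<le> euler_weight p n k"
  unfolding euler_weight_def by simp

lemma sum_euler_weight:
  assumes "p \<noteq> -1"
  shows "(\<Sum>k\<le>n. euler_weight p n k) = 1"
proof -
  have binomial: "(\<Sum>k\<le>n. real (n choose k) * p ^ (n - k)) = (p + 1) ^ n"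
    using binomial_ring[of 1 p n] by (simp add: add.commute)
  have "p + 1 \<noteq> 0" using assms by auto
  then show ?thesis
    unfolding euler_weight_def sum_divide_distrib[symmetric] binomial by simp
qed

lemma euler_weight_tendsto_zero:
  assumes "0 < p"
  shows "(\<lambda>n. euler_weight p n k) \<longlonglongrightarrow> 0"
proof (rule tendsto_sandwich[of "\<lambda>n. 0" _ _ "\<lambda>n. real n ^ k * (p / (p + 1)) ^ n / p ^ k"])
  show "\<forall>\<^sub>F n in sequentially. 0 \<le> euler_weight p n k"
    using assms by (simp add: euler_weight_nonneg)
  show "\<forall>\<^sub>F n in sequentially. euler_weight p n k \<le> real n ^ k * (p / (p + 1)) ^ n / p ^ k"
    using eventually_ge_at_top[of k]
  proof eventually_elim
    case (elim n)
    have "real (n choose k) \<le> real n ^ k"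
      using binomial_le_pow[OF elim] by (metis of_nat_le_iff of_nat_power)
    moreover have "euler_weight p n k = real (n choose k) * ((p / (p + 1)) ^ n / p ^ k)"
      unfolding euler_weight_def using assms elim by (simp add: power_diff power_divide)
    ultimately show ?case
      using mult_right_mono[of "real (n choose k)" "real n ^ k" "(p / (p + 1)) ^ n / p ^ k"] assms
      by simp
  qed
  have "(\<lambda>n. real n ^ k * (p / (p + 1)) ^ n) \<longlonglongrightarrow> 0"
    by (rule polynomial_times_geometric_tendsto_zero) (use assms in simp_all)
  then show "(\<lambda>n. real n ^ k * (p / (p + 1)) ^ n / p ^ k) \<longlonglongrightarrow> 0"
    by (rule tendsto_divide_zero)
qed simp

lemma admissible_levels_euler_mean:
  assumes "0 \<le> p" "\<And>n. admissible_levels (u n)"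
  shows "admissible_levels (euler_mean p u n)"
  unfolding euler_mean_def
  by (intro admissible_levels_fscale admissible_levels_fsum assms(2)) (use assms(1) in simp_all)

lemma endpoints_euler_mean:
  assumes "0 \<le> p" "\<And>n. admissible_levels (u n)" "0 \<le> a" "a \<le> 1"
  shows "lower (euler_mean p u n) a = (\<Sum>k\<le>n. euler_weight p n k * lower (fsum u k) a)"
    and "upper (euler_mean p u n) a = (\<Sum>k\<le>n. euler_weight p n k * upper (fsum u k) a)"
proof -
  define c where "c k = real (n choose k) * p ^ (n - k)" for k
  have c: "0 \<le> c k" for k unfolding c_def using assms(1) by simp
  have q: "0 \<le> 1 / (p + 1) ^ n" using assms(1) by simp
  have partial: "admissible_levels (fsum u k)" for k by (rule admissible_levels_fsum[OF assms(2)])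
  have scaled: "admissible_levels (fscale (c k) (fsum u k))" for k
    by (rule admissible_levels_fscale[OF partial c])
  have summed: "admissible_levels (fsum (\<lambda>k. fscale (c k) (fsum u k)) n)"
    by (rule admissible_levels_fsum[OF scaled])
  have mean: "euler_mean p u n = fscale (1 / (p + 1) ^ n) (fsum (\<lambda>k. fscale (c k) (fsum u k)) n)"
    unfolding euler_mean_def c_def ..
  have weight: "1 / (p + 1) ^ n * (\<Sum>k\<le>n. c k * X k) = (\<Sum>k\<le>n. euler_weight p n k * X k)" for X
    unfolding euler_weight_def c_def sum_distrib_left by (simp add: field_simps)
  show "lower (euler_mean p u n) a = (\<Sum>k\<le>n. euler_weight p n k * lower (fsum u k) a)"
    unfolding mean endpoints_fscale[OF summed q assms(3,4)] endpoints_fsum[OF scaled assms(3,4)]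
      endpoints_fscale[OF partial c assms(3,4)] weight ..
  show "upper (euler_mean p u n) a = (\<Sum>k\<le>n. euler_weight p n k * upper (fsum u k) a)"
    unfolding mean endpoints_fscale[OF summed q assms(3,4)] endpoints_fsum[OF scaled assms(3,4)]
      endpoints_fscale[OF partial c assms(3,4)] weight ..
qed

theorem mainTheorem4:
  fixes p :: real and u :: "nat \<Rightarrow> real \<Rightarrow> real" and \<nu> :: "real \<Rightarrow> real"
  assumes "p > 0"
    and "\<And>n. fuzzy_number (u n)"
    and "fuzzy_number \<nu>"
    and "(\<lambda>n. fdist (fsum u n) \<nu>) \<longlonglongrightarrow> 0"
  shows "(\<lambda>n. fdist (euler_mean p u n) \<nu>) \<longlonglongrightarrow> 0"
proof -
  have p: "0 \<le> p" "p \<noteq> -1" using assms(1) by auto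
  have terms: "admissible_levels (u n)" for n by (rule fuzzy_number_admissible[OF assms(2)])
  have limit: "admissible_levels \<nu>" by (rule fuzzy_number_admissible[OF assms(3)])
  have partial: "admissible_levels (fsum u k)" for k by (rule admissible_levels_fsum[OF terms])
  have upper: "fdist (euler_mean p u n) \<nu> \<le> (\<Sum>k\<le>n. euler_weight p n k * fdist (fsum u k) \<nu>)" for n
    by (rule fdist_convex_combination_le[OF limit partial euler_weight_nonneg[OF p(1)]
          sum_euler_weight[OF p(2)] endpoints_euler_mean(1,2)[OF p(1) terms]])
  have upper_limit: "(\<lambda>n. \<Sum>k\<le>n. euler_weight p n k * fdist (fsum u k) \<nu>) \<longlonglongrightarrow> 0"
    by (rule weighted_means_tendsto_zero[OF euler_weight_nonneg[OF p(1)] _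
          euler_weight_tendsto_zero[OF assms(1)] assms(4)])
      (simp add: sum_euler_weight[OF p(2)])
  have lower: "0 \<le> fdist (euler_mean p u n) \<nu>" for n
    by (rule fdist_nonneg[OF admissible_levels_euler_mean[OF p(1) terms] limit])
  show ?thesis
    by (rule tendsto_sandwich[OF always_eventually always_eventually tendsto_const upper_limit])
      (use lower upper in blast)+
qed

end
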